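(* Let $p\geq 3$ be a prime, $u\in\{2,\ldots,p-1\}$ and $s$ a positive integer. Then $$\nu_{p}\big(A_{p,(p-1)(up^s-1)}(n)\big)=1$$ for infinitely many $n\in\mathbb{N}$.
   Context: For an integer $m\geq 2$ and a positive integer $k$, the integers $A_{m,k}(n)$, $n\in\mathbb{N}=\{0,1,2,\ldots\}$, are defined by the formal power series identity $\prod_{i=0}^{\infty}\big(1-x^{m^{i}}\big)^{-k}=\sum_{n=0}^{\infty}A_{m,k}(n)x^{n}$. For a prime $p$, $\nu_p(n)$ denotes the $p$-adic valuation of the integer $n$, with $\nu_p(0)=+\infty$. *)

theory Defs
  imports "HOL-Computational_Algebra.Computational_Algebra"
begin

text \<open>The power series (1 - x^a)^(-1) = sum_j x^(a j), with integer coefficients.\<close>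
definition geom_fps :: "nat \<Rightarrow> int fps" where
  "geom_fps a = Abs_fps (\<lambda>j. if a dvd j then 1 else 0)"

text \<open>A_{m,k}(n): coefficient of x^n in prod_{i>=0} (1 - x^(m^i))^(-k).
  Factors with m^i > n are 1 + O(x^(n+1)) and do not affect the n-th coefficient,
  so the product over i \<le> n suffices (m^i > n for i > n since m \<ge> 2).\<close>
definition A :: "nat \<Rightarrow> nat \<Rightarrow> nat \<Rightarrow> int" where
  "A m k n = fps_nth ((\<Prod>i\<le>n. geom_fps (m ^ i)) ^ k) n"

end

theory Submission
  imports Defs
begin

text \<open>
  The generating function F(x) of A_{p,k} satisfies the Mahler equation F(x) (1 - x)^k = F(x^p).
  For k = (p - 1) m the polynomial (1 - x)^m satisfies the same equation modulo p, because
  (1 - x)^p = 1 - x^p (mod p), and the equation determines all coefficients from the constant one.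
  Hence A_{p,k}(n) is congruent modulo p to the coefficient of x^n in (1 - x)^m, so p divides
  A_{p,k}(n) for every n > m.

  If the valuation were 1 only finitely often, p^2 would divide A_{p,k}(n) for all large n, and a
  truncation R of F would solve the equation modulo p^2 with R(0) = 1. The substitution
  x \<mapsto> 1 - x turns this into x^k Q(x) = Q(x^p + p W(x)) (mod p^2) with Q(1) = 1 and
  W = x + O(x^2). Modulo p, the coefficient of x^{p j} links the coefficients of x^j and of
  x^{p j - k} in Q, and p j - k = j + (p - 1) (j - m) lies farther from m than j unless j = m;
  hence Q = c x^m (mod p), where p does not divide c because Q(1) = 1. Modulo p^2 the
  first-order Taylor expansion of Q at x^p then contributes the term p m c x^{p (m - 1) + 1},
  which nothing else can match because p does not divide m c.
\<close>

section \<open>Congruences of polynomials modulo a constant\<close>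

definition poly_cong :: "'a::comm_ring_1 \<Rightarrow> 'a poly \<Rightarrow> 'a poly \<Rightarrow> bool" where
  "poly_cong q F G \<longleftrightarrow> [:q:] dvd F - G"

lemma poly_cong_refl [simp]: "poly_cong q F F"
  by (simp add: poly_cong_def)

lemma poly_cong_trans [trans]:
  assumes "poly_cong q F G" and "poly_cong q G H"
  shows "poly_cong q F H"
proof -
  have "F - H = (F - G) + (G - H)" by simp
  with assms show ?thesis unfolding poly_cong_def by (metis dvd_add)
qed

lemma poly_cong_add:
  assumes "poly_cong q F G" and "poly_cong q F' G'"
  shows "poly_cong q (F + F') (G + G')"
proof -
  have "F + F' - (G + G') = (F - G) + (F' - G')" by simp
  with assms show ?thesis unfolding poly_cong_def by (metis dvd_add)
qed

lemma poly_cong_mult: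
  assumes "poly_cong q F G" and "poly_cong q F' G'"
  shows "poly_cong q (F * F') (G * G')"
proof -
  have "F * F' - G * G' = (F - G) * F' + G * (F' - G')" by (simp add: algebra_simps)
  with assms show ?thesis unfolding poly_cong_def by (metis dvd_add dvd_mult dvd_mult2)
qed

lemma poly_cong_power: "poly_cong q F G \<Longrightarrow> poly_cong q (F ^ n) (G ^ n)"
  by (induction n) (auto intro: poly_cong_mult)

lemma const_poly_dvd_smult [simp]: "[:q:] dvd smult q G"
  using dvd_triv_left[of "[:q:]" G] by simp

lemma poly_cong_add_smult: "poly_cong q (F + smult q G) F"
  by (simp add: poly_cong_def)

lemma poly_cong_modulus_dvd:
  assumes "r dvd q" and "poly_cong q F G"
  shows "poly_cong r F G"
proof -
  obtain t where "q = r * t" using assms(1) by (elim dvdE)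
  then have "[:r:] dvd [:q:]" using dvd_triv_left[of "[:r:]" "[:t:]"] by (simp add: mult.commute)
  then show ?thesis using assms(2) unfolding poly_cong_def by (rule dvd_trans)
qed

lemma poly_cong_smult_modulus:
  assumes "poly_cong q F G"
  shows "poly_cong (q * r) (smult r F) (smult r G)"
proof -
  obtain D where "F - G = [:q:] * D" using assms unfolding poly_cong_def by (elim dvdE)
  then have "smult r F - smult r G = smult (q * r) D" by (simp add: mult.commute flip: smult_diff_right)
  then show ?thesis unfolding poly_cong_def by simp
qed

lemma poly_cong_pcompose:
  assumes "poly_cong q F G"
  shows "poly_cong q (pcompose F H) (pcompose G H)"
proof -
  obtain D where "F - G = [:q:] * D" using assms unfolding poly_cong_def by (elim dvdE)
  then have "pcompose F H - pcompose G H = [:q:] * pcompose D H"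
    by (metis pcompose_diff pcompose_mult pcompose_const)
  then show ?thesis unfolding poly_cong_def by simp
qed

lemma poly_cong_pcompose_right:
  assumes "poly_cong q V W"
  shows "poly_cong q (pcompose F V) (pcompose F W)"
proof (induction F)
  case (pCons c F)
  show ?case unfolding pcompose_pCons
    by (intro poly_cong_add poly_cong_mult assms pCons.IH poly_cong_refl)
qed simp

lemma poly_cong_pderiv:
  fixes F G :: "'a::idom poly"
  assumes "poly_cong q F G"
  shows "poly_cong q (pderiv F) (pderiv G)"
proof -
  obtain D where "F - G = [:q:] * D" using assms unfolding poly_cong_def by (elim dvdE)
  then have "pderiv F - pderiv G = [:q:] * pderiv D"
    by (simp add: pderiv_diff[symmetric] pderiv_smult)
  then show ?thesis unfolding poly_cong_def by simp
qed

lemma poly_cong_iff_coeff: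
  fixes F G :: "'a::idom poly"
  shows "poly_cong q F G \<longleftrightarrow> (\<forall>n. q dvd coeff F n - coeff G n)"
  by (simp add: poly_cong_def const_poly_dvd_iff)

lemma poly_cong_poly:
  assumes "poly_cong q F G"
  shows "q dvd poly F x - poly G x"
proof -
  obtain D where "F - G = [:q:] * D" using assms unfolding poly_cong_def by (elim dvdE)
  then have "poly F x - poly G x = q * poly D x" by (metis poly_diff poly_mult poly_const_conv)
  then show ?thesis by simp
qed

section \<open>Substitutions into polynomials and power series\<close>

lemma fps_nth_compose_X_power:
  fixes F :: "'a::comm_ring_1 fps"
  assumes "0 < p"
  shows "(F oo fps_X ^ p) $ n = (if p dvd n then F $ (n div p) else 0)"
proof -
  have "(F oo fps_X ^ p) $ n = (\<Sum>i=0..n. F $ i * (fps_X ^ (p * i)) $ n)"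
    by (simp add: fps_compose_nth power_mult)
  also have "\<dots> = (\<Sum>i=0..n. if p dvd n \<and> i = n div p then F $ i else 0)"
    using assms by (intro sum.cong) auto
  also have "\<dots> = (if p dvd n then F $ (n div p) else 0)"
    using assms by (auto simp: div_le_dividend)
  finally show ?thesis .
qed

lemma fps_const_dvd_iff:
  fixes F :: "'a::algebraic_semidom fps"
  shows "fps_const q dvd F \<longleftrightarrow> (\<forall>n. q dvd F $ n)"
proof
  assume "fps_const q dvd F"
  then show "\<forall>n. q dvd F $ n" by (auto elim!: dvdE)
next
  assume "\<forall>n. q dvd F $ n"
  then have "F = fps_const q * Abs_fps (\<lambda>n. F $ n div q)"
    by (intro fps_ext) (simp add: dvd_mult_div_cancel)
  then show "fps_const q dvd F" by (rule dvdI)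
qed

lemma fps_const_dvd_fps_of_poly_iff:
  fixes F :: "'a::algebraic_semidom poly"
  shows "fps_const q dvd fps_of_poly F \<longleftrightarrow> [:q:] dvd F"
  by (simp add: fps_const_dvd_iff const_poly_dvd_iff)

lemma fps_of_poly_pcompose_monom:
  fixes F :: "'a::idom poly"
  assumes "0 < p"
  shows "fps_of_poly (pcompose F (monom 1 p)) = fps_of_poly F oo fps_X ^ p"
  using assms by (simp add: fps_of_poly_pcompose coeff_monom fps_of_poly_monom')

lemma coeff_pcompose_monom:
  fixes F :: "'a::idom poly"
  assumes "0 < p"
  shows "coeff (pcompose F (monom 1 p)) n = (if p dvd n then coeff F (n div p) else 0)"
proof -
  have "coeff (pcompose F (monom 1 p)) n = fps_of_poly (pcompose F (monom 1 p)) $ n" by simp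
  also have "\<dots> = (if p dvd n then coeff F (n div p) else 0)"
    using assms by (simp add: fps_of_poly_pcompose_monom fps_nth_compose_X_power)
  finally show ?thesis .
qed

lemma coeff_monom_one_mult:
  fixes Q :: "'a::comm_semiring_1 poly"
  shows "coeff (monom 1 k * Q) n = (if k \<le> n then coeff Q (n - k) else 0)"
  by (simp add: coeff_monom_mult not_less)

lemma coeff_pcompose_monom_mult:
  fixes F :: "'a::idom poly"
  assumes "0 < p"
  shows "coeff (pcompose F (monom 1 p)) (p * j) = coeff F j"
  using assms by (simp add: coeff_pcompose_monom)

lemma pcompose_power_left: "pcompose (F ^ n) G = pcompose F G ^ n"
  by (induction n) (simp_all add: pcompose_mult pcompose_1)

lemma pcompose_monom: "pcompose (monom c n) G = smult c (G ^ n)"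
  by (simp add: monom_altdef pcompose_smult pcompose_power_left pcompose_pCons)

lemma pcompose_one_minus_X: "pcompose [:1, -1:] G = 1 - (G :: 'a::comm_ring_1 poly)"
  by (simp add: pcompose_pCons flip: one_pCons)

lemma pcompose_one_minus_X_involution: "pcompose [:1, -1:] [:1, -1 :: 'a::comm_ring_1:] = [:0, 1:]"
  by (simp add: pcompose_one_minus_X one_pCons)

lemma one_minus_X_power_prime_cong:
  assumes "prime p"
  shows "poly_cong (int p) ([:1, -1:] ^ p) (1 - monom 1 p)"
  unfolding poly_cong_iff_coeff
proof
  fix j
  have p: "2 \<le> p" using assms by (rule prime_ge_2_nat)
  have binom: "coeff ([:1, -1:] ^ p) i = (-1) ^ i * of_nat (p choose i)" if "i \<le> p" for i
    using that by (simp add: coeff_linear_poly_power mult.commute)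
  consider "j = 0" | "0 < j" "j < p" | "j = p" | "p < j" by linarith
  then show "int p dvd coeff ([:1, -1:] ^ p) j - coeff (1 - monom 1 p) j"
  proof cases
    case 1
    then show ?thesis using p by (simp add: binom coeff_monom)
  next
    case 2
    then have "p dvd p choose j" using assms by (intro dvd_choose_prime) auto
    then have "int p dvd int (p choose j)" by (simp only: int_dvd_int_iff)
    then show ?thesis using 2 by (simp add: binom coeff_monom)
  next
    case 3
    have "int p dvd (-1) ^ p + 1"
    proof (cases "even p")
      case True
      have "p = 2"
      proof (rule ccontr)
        assume "p \<noteq> 2"
        then have "odd p" using assms p prime_odd_nat by simp
        with True show False by simp
      qed
      then show ?thesis by simp
    qed simp
    then show ?thesis using 3 p by (simp add: binom coeff_monom)
  next
    case 4
    have "degree ([:1, -1 :: int:] ^ p) \<le> p" using degree_power_le[of "[:1, -1 :: int:]" p] by simp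
    then show ?thesis using 4 by (simp add: coeff_eq_0 coeff_monom)
  qed
qed

lemma one_minus_X_power_prime_decomp:
  assumes "prime p"
  obtains W :: "int poly"
  where "1 - [:1, -1:] ^ p = monom 1 p + smult (int p) W" and "coeff W 0 = 0" and "coeff W 1 = 1"
proof -
  have p: "2 \<le> p" using assms by (rule prime_ge_2_nat)
  obtain V where V: "[:1, -1:] ^ p - (1 - monom 1 p) = [:int p:] * V"
    using one_minus_X_power_prime_cong[OF assms] unfolding poly_cong_def by (elim dvdE)
  then have decomp: "1 - [:1, -1:] ^ p = monom 1 p + smult (int p) (- V)"
    by (simp add: algebra_simps)
  have "coeff (1 - [:1, -1 :: int:] ^ p) 0 = 0" by (simp add: coeff_linear_poly_power)
  then have "coeff (- V) 0 = 0" using p by (simp add: decomp coeff_monom)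
  moreover have "coeff (1 - [:1, -1 :: int:] ^ p) 1 = int p"
    using p by (simp add: coeff_linear_poly_power)
  then have "int p * (coeff (- V) 1 - 1) = 0" using p by (simp add: decomp coeff_monom algebra_simps)
  then have "coeff (- V) 1 = 1" using p by simp
  ultimately show ?thesis using decomp that by blast
qed

lemma pcompose_add_smult_cong:
  fixes Q a W :: "'a::idom poly"
  shows "poly_cong (q ^ 2) (pcompose Q (a + smult q W))
           (pcompose Q a + smult q (W * pcompose (pderiv Q) a))"
proof (induction Q)
  case (pCons c Q)
  let ?b = "a + smult q W" and ?D = "pcompose (pderiv Q) a"
  have "poly_cong (q ^ 2) (pcompose (pCons c Q) ?b) ([:c:] + ?b * (pcompose Q a + smult q (W * ?D)))"
    unfolding pcompose_pCons by (intro poly_cong_add poly_cong_mult poly_cong_refl pCons.IH)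
  also have "[:c:] + ?b * (pcompose Q a + smult q (W * ?D))
      = ([:c:] + a * pcompose Q a + smult q (W * (pcompose Q a + a * ?D))) + smult (q ^ 2) (W * W * ?D)"
    by (simp add: algebra_simps power2_eq_square smult_add_right)
  also have "poly_cong (q ^ 2) \<dots> ([:c:] + a * pcompose Q a + smult q (W * (pcompose Q a + a * ?D)))"
    by (rule poly_cong_add_smult)
  also have "[:c:] + a * pcompose Q a + smult q (W * (pcompose Q a + a * ?D))
      = pcompose (pCons c Q) a + smult q (W * pcompose (pderiv (pCons c Q)) a)"
    by (simp add: pcompose_pCons pderiv_pCons pcompose_add algebra_simps)
  finally show ?case .
qed simp

lemma pcompose_add_smult_cong_monom:
  fixes Q a W :: "'a::idom poly"
  assumes "poly_cong q Q (monom c m)"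
  shows "poly_cong (q ^ 2) (pcompose Q (a + smult q W))
           (pcompose Q a + smult (q * of_nat m * c) (W * a ^ (m - 1)))"
proof -
  have "poly_cong q (pcompose (pderiv Q) a) (smult (of_nat m * c) (a ^ (m - 1)))"
    using poly_cong_pcompose[OF poly_cong_pderiv[OF assms]] unfolding pderiv_monom pcompose_monom .
  then have "poly_cong (q * q) (smult q (W * pcompose (pderiv Q) a))
      (smult q (W * smult (of_nat m * c) (a ^ (m - 1))))"
    by (intro poly_cong_smult_modulus poly_cong_mult poly_cong_refl)
  then have "poly_cong (q ^ 2) (pcompose Q a + smult q (W * pcompose (pderiv Q) a))
      (pcompose Q a + smult (q * of_nat m * c) (W * a ^ (m - 1)))"
    by (simp add: power2_eq_square poly_cong_add mult.assoc)
  with pcompose_add_smult_cong show ?thesis by (rule poly_cong_trans)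
qed

section \<open>The functional congruence has no polynomial solution modulo p^2\<close>

lemma dvd_coeff_below_of_functional_cong:
  fixes Q E :: "int poly"
  assumes "1 < p" and "k = (p - 1) * m"
    and cong: "poly_cong q (monom 1 k * Q) (pcompose Q (monom 1 p) + E)"
    and E: "\<And>j. j < m \<Longrightarrow> coeff E (p * j) = 0"
  shows "j < m \<Longrightarrow> q dvd coeff Q j"
proof (induction j rule: less_induct)
  case (less j)
  have "q dvd coeff (monom 1 k * Q) (p * j) - coeff (pcompose Q (monom 1 p) + E) (p * j)"
    using cong unfolding poly_cong_iff_coeff by blast
  then have rel: "q dvd (if k \<le> p * j then coeff Q (p * j - k) else 0) - coeff Q j"
    using assms(1) E[OF less.prems]
    by (simp only: coeff_monom_one_mult coeff_add coeff_pcompose_monom_mult) simp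
  show ?case
  proof (cases "k \<le> p * j")
    case True
    obtain p' where p: "p = Suc p'" using assms(1) by (cases p) auto
    have "p' * j < p' * m" "p * j = j + p' * j" "k = p' * m"
      using less.prems assms p by simp_all
    then have "p * j - k < j" using True by linarith
    then have "q dvd coeff Q (p * j - k)" using less.IH less.prems by simp
    moreover have "q dvd coeff Q (p * j - k) - coeff Q j" using rel True by simp
    ultimately have "q dvd coeff Q (p * j - k) - (coeff Q (p * j - k) - coeff Q j)"
      by (rule dvd_diff)
    then show ?thesis by simp
  next
    case False
    with rel show ?thesis by simp
  qed
qed

lemma dvd_coeff_above_of_functional_cong:
  fixes Q :: "int poly"
  assumes "1 < p" and "k = (p - 1) * m"
    and cong: "poly_cong q (monom 1 k * Q) (pcompose Q (monom 1 p))"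
  shows "m < j \<Longrightarrow> q dvd coeff Q j"
proof (induction j rule: measure_induct_rule[where f = "\<lambda>j. degree Q - j"])
  case (less j)
  obtain p' where p: "p = Suc p'" using assms(1) by (cases p) auto
  have "p' * m < p' * j" "p * j = j + p' * j" "k = p' * m"
    using less.prems assms p by simp_all
  then have up: "k \<le> p * j" "j < p * j - k" by linarith+
  have "q dvd coeff (monom 1 k * Q) (p * j) - coeff (pcompose Q (monom 1 p)) (p * j)"
    using cong unfolding poly_cong_iff_coeff by blast
  then have rel: "q dvd coeff Q (p * j - k) - coeff Q j"
    using assms(1) up by (simp only: coeff_monom_one_mult coeff_pcompose_monom_mult) simp
  have "q dvd coeff Q (p * j - k)"
  proof (cases "degree Q < p * j - k")
    case True
    then show ?thesis by (simp add: coeff_eq_0)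
  next
    case False
    then show ?thesis using less.IH[of "p * j - k"] less.prems up by simp
  qed
  from dvd_diff[OF this rel] show ?case by simp
qed

lemma poly_cong_monom_of_functional_cong:
  fixes Q :: "int poly"
  assumes "1 < p" and "k = (p - 1) * m"
    and cong: "poly_cong q (monom 1 k * Q) (pcompose Q (monom 1 p))"
  shows "poly_cong q Q (monom (coeff Q m) m)"
  unfolding poly_cong_iff_coeff
proof
  fix j
  have "poly_cong q (monom 1 k * Q) (pcompose Q (monom 1 p) + 0)" using cong by simp
  then have "j < m \<Longrightarrow> q dvd coeff Q j"
    by (rule dvd_coeff_below_of_functional_cong[OF assms(1,2)]) simp_all
  moreover have "m < j \<Longrightarrow> q dvd coeff Q j"
    using dvd_coeff_above_of_functional_cong[OF assms] by simp
  ultimately show "q dvd coeff Q j - coeff (monom (coeff Q m) m) j"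
    by (cases j m rule: linorder_cases) (auto simp: coeff_monom)
qed

lemma shifted_functional_cong_mod_p:
  fixes Q W :: "int poly"
  assumes "1 < p" and "k = (p - 1) * m"
    and "poly_cong (int p ^ 2) (monom 1 k * Q) (pcompose Q (monom 1 p + smult (int p) W))"
  shows "poly_cong (int p) Q (monom (coeff Q m) m)"
proof -
  have "poly_cong (int p) (monom 1 k * Q) (pcompose Q (monom 1 p + smult (int p) W))"
    using assms(3) by (rule poly_cong_modulus_dvd[rotated]) simp
  also have "poly_cong (int p) \<dots> (pcompose Q (monom 1 p))"
    by (intro poly_cong_pcompose_right poly_cong_add_smult)
  finally show ?thesis by (rule poly_cong_monom_of_functional_cong[OF assms(1,2)])
qed

lemma shifted_functional_cong_linearized:
  fixes Q W :: "int poly"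
  assumes "poly_cong (int p) Q (monom c m)"
    and "poly_cong (int p ^ 2) (monom 1 k * Q) (pcompose Q (monom 1 p + smult (int p) W))"
  shows "poly_cong (int p ^ 2) (monom 1 k * Q)
           (pcompose Q (monom 1 p) + smult (int p * int m * c) (W * monom 1 (p * (m - 1))))"
proof -
  have "poly_cong (int p ^ 2) (pcompose Q (monom 1 p + smult (int p) W))
      (pcompose Q (monom 1 p) + smult (int p * int m * c) (W * monom 1 (p * (m - 1))))"
    using pcompose_add_smult_cong_monom[OF assms(1), of "monom 1 p" W]
    by (simp add: monom_power mult.commute)
  with assms(2) show ?thesis by (rule poly_cong_trans)
qed

lemma dvd_of_linearized_functional_cong:
  fixes Q W :: "int poly"
  assumes "1 < p" and "p - 1 \<le> m" and k: "k = (p - 1) * m"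
    and W: "coeff W 0 = 0" "coeff W 1 = 1"
    and cong: "poly_cong q (monom 1 k * Q) (pcompose Q (monom 1 p) + smult e (W * monom 1 (p * (m - 1))))"
  shows "q dvd e"
proof -
  define d where "d = p * (m - 1)"
  have coeff_W_shift: "coeff (W * monom 1 d) n = (if d \<le> n then coeff W (n - d) else 0)" for n
    by (simp add: mult.commute[of W] coeff_monom_one_mult)
  have below: "q dvd coeff Q j" if "j < m" for j
    using cong[folded d_def] _ that
  proof (rule dvd_coeff_below_of_functional_cong[OF assms(1) k])
    fix i assume "i < m"
    then show "coeff (smult e (W * monom 1 d)) (p * i) = 0"
      unfolding coeff_smult coeff_W_shift using assms(1) W by (auto simp: d_def)
  qed
  obtain m' p' where m': "m = Suc m'" and p': "p = Suc p'"
    using assms(1,2) by (cases m; cases p) auto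
  text \<open>At x^n the right-hand side of the congruence reduces to e times the coefficient 1 of x
    in W, as p does not divide n.\<close>
  define n where "n = d + 1"
  have "k \<le> n" "n - k < m" "n - d = 1"
    using assms(1,2) unfolding n_def d_def k m' p' by (simp_all add: algebra_simps)
  have "p dvd d" by (simp add: d_def)
  then have "\<not> p dvd n"
    using assms(1) dvd_add_right_iff[of p d 1] unfolding n_def by simp
  moreover have "q dvd coeff (monom 1 k * Q) n - coeff (pcompose Q (monom 1 p) + smult e (W * monom 1 d)) n"
    using cong[folded d_def] unfolding poly_cong_iff_coeff by blast
  ultimately have "q dvd coeff Q (n - k) - e"
    using assms(1) \<open>k \<le> n\<close> \<open>n - d = 1\<close> W
    by (simp add: coeff_monom_one_mult coeff_pcompose_monom coeff_W_shift n_def)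
  moreover have "q dvd coeff Q (n - k)" using below \<open>n - k < m\<close> by blast
  ultimately show ?thesis using dvd_diff[of q "coeff Q (n - k)" "coeff Q (n - k) - e"] by simp
qed

lemma shifted_functional_cong_mod_sq_impossible:
  fixes Q W :: "int poly"
  assumes "prime p" and "p - 1 \<le> m" and "\<not> p dvd m" and k: "k = (p - 1) * m"
    and W: "coeff W 0 = 0" "coeff W 1 = 1"
    and cong: "poly_cong (int p ^ 2) (monom 1 k * Q) (pcompose Q (monom 1 p + smult (int p) W))"
    and "\<not> int p dvd poly Q 1"
  shows False
proof -
  define c where "c = coeff Q m"
  have p: "1 < p" using assms(1) by (rule prime_gt_1_nat)
  have Q_cong: "poly_cong (int p) Q (monom c m)"
    unfolding c_def using p k cong by (rule shifted_functional_cong_mod_p)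
  have "int p dvd poly Q 1 - c"
    using poly_cong_poly[OF Q_cong, of 1] by (simp add: poly_monom)
  then have "\<not> int p dvd c" using assms(8) dvd_add[of "int p" "poly Q 1 - c" c] by auto
  have "int p ^ 2 dvd int p * int m * c"
    using shifted_functional_cong_linearized[OF Q_cong cong]
    by (rule dvd_of_linearized_functional_cong[OF p assms(2) k W])
  then have "int p * int p dvd int p * (int m * c)" by (simp add: power2_eq_square mult.assoc)
  then have "int p dvd int m * c" using p by simp
  then show False
    using assms(1,3) \<open>\<not> int p dvd c\<close> by (simp add: prime_dvd_mult_iff)
qed

lemma functional_cong_mod_sq_impossible:
  fixes R :: "int poly"
  assumes "prime p" and "p - 1 \<le> m" and "\<not> p dvd m" and k: "k = (p - 1) * m"
    and "\<not> int p dvd coeff R 0"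
    and cong: "poly_cong (int p ^ 2) (R * [:1, -1:] ^ k) (pcompose R (monom 1 p))"
  shows False
proof -
  define Q where "Q = pcompose R [:1, -1:]"
  have R: "R = pcompose Q [:1, -1:]"
    by (simp add: Q_def pcompose_one_minus_X_involution flip: pcompose_assoc)
  obtain W where W: "1 - [:1, -1:] ^ p = monom 1 p + smult (int p) W" "coeff W 0 = 0" "coeff W 1 = 1"
    using one_minus_X_power_prime_decomp[OF assms(1)] by blast
  have "pcompose (R * [:1, -1:] ^ k) [:1, -1:] = monom 1 k * Q"
    by (simp add: Q_def pcompose_mult pcompose_power_left pcompose_one_minus_X_involution
        monom_altdef mult.commute)
  moreover have "pcompose (pcompose R (monom 1 p)) [:1, -1:] = pcompose Q (monom 1 p + smult (int p) W)"
    by (simp add: R pcompose_monom pcompose_one_minus_X pcompose_diff pcompose_1 flip: pcompose_assoc W(1))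
  ultimately have "poly_cong (int p ^ 2) (monom 1 k * Q) (pcompose Q (monom 1 p + smult (int p) W))"
    using poly_cong_pcompose[OF cong, of "[:1, -1:]"] by simp
  moreover have "poly Q 1 = coeff R 0"
    by (simp add: Q_def poly_pcompose poly_0_coeff_0)
  ultimately show False
    using shifted_functional_cong_mod_sq_impossible[OF assms(1-4) W(2,3)] assms(5) by metis
qed

section \<open>The generating function of A\<close>

lemma fps_cutoff_mult_cong:
  assumes "fps_cutoff n F = fps_cutoff n G" and "fps_cutoff n F' = fps_cutoff n G'"
  shows "fps_cutoff n (F * F') = fps_cutoff n (G * G')"
proof -
  have "(F * F') $ i = (G * G') $ i" if "i < n" for i
  proof -
    have "(F * F') $ i = (fps_cutoff n F * fps_cutoff n F') $ i"
      using that by (simp add: fps_cutoff_left_mult_nth fps_cutoff_right_mult_nth)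
    also have "\<dots> = (G * G') $ i"
      using that by (simp add: assms fps_cutoff_left_mult_nth fps_cutoff_right_mult_nth)
    finally show ?thesis .
  qed
  then show ?thesis by (simp add: fps_cutoff_eq_fps_cutoff_iff)
qed

lemma fps_cutoff_power_cong:
  assumes "fps_cutoff n F = fps_cutoff n G"
  shows "fps_cutoff n (F ^ k) = fps_cutoff n (G ^ k)"
proof (induction k)
  case (Suc k)
  show ?case using fps_cutoff_mult_cong[OF assms Suc.IH] by simp
qed simp

lemma geom_fps_nth: "geom_fps a $ j = (if a dvd j then 1 else 0)"
  by (simp add: geom_fps_def)

lemma fps_cutoff_geom_fps: "n \<le> a \<Longrightarrow> fps_cutoff n (geom_fps a) = fps_cutoff n 1"
  by (auto simp: fps_cutoff_eq_fps_cutoff_iff geom_fps_nth dest: dvd_imp_le)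

lemma geom_fps_one_mult_one_minus_X: "geom_fps 1 * (1 - fps_X) = 1"
  by (rule fps_ext) (simp add: geom_fps_nth algebra_simps mult.commute[of _ fps_X])

lemma geom_fps_compose_X_power:
  assumes "0 < p"
  shows "geom_fps a oo fps_X ^ p = geom_fps (p * a)"
proof (rule fps_ext)
  fix n
  have "p * a dvd n \<longleftrightarrow> p dvd n \<and> a dvd n div p"
    using assms by (metis dvd_div_iff_mult dvd_mult_left mult.commute not_gr0)
  then show "(geom_fps a oo fps_X ^ p) $ n = geom_fps (p * a) $ n"
    using assms by (simp add: fps_nth_compose_X_power geom_fps_nth)
qed

definition geom_prod :: "nat \<Rightarrow> nat \<Rightarrow> int fps" where
  "geom_prod m N = (\<Prod>i\<le>N. geom_fps (m ^ i))"

lemma fps_cutoff_geom_prod: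
  assumes "2 \<le> m" and "n \<le> N"
  shows "fps_cutoff (Suc n) (geom_prod m N) = fps_cutoff (Suc n) (geom_prod m n)"
  using assms(2)
proof (induction N rule: dec_induct)
  case (step N)
  have "Suc n \<le> Suc N" using step.hyps by simp
  also have "Suc N < 2 ^ Suc N" by (rule less_exp)
  also have "2 ^ Suc N \<le> m ^ Suc N" using assms(1) by (rule power_mono) simp
  finally have "fps_cutoff (Suc n) (geom_fps (m ^ Suc N)) = fps_cutoff (Suc n) 1"
    by (intro fps_cutoff_geom_fps) simp
  then have "fps_cutoff (Suc n) (geom_prod m N * geom_fps (m ^ Suc N))
      = fps_cutoff (Suc n) (geom_prod m n * 1)"
    by (intro fps_cutoff_mult_cong step.IH)
  then show ?case by (simp add: geom_prod_def)
qed simp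

lemma A_eq_nth_geom_prod_power:
  assumes "2 \<le> m" and "n \<le> N"
  shows "A m k n = (geom_prod m N ^ k) $ n"
proof -
  have "fps_cutoff (Suc n) (geom_prod m N ^ k) = fps_cutoff (Suc n) (geom_prod m n ^ k)"
    by (intro fps_cutoff_power_cong fps_cutoff_geom_prod assms)
  then show ?thesis
    unfolding A_def geom_prod_def[symmetric] fps_cutoff_eq_fps_cutoff_iff by simp
qed

lemma A_0: "A m k 0 = 1"
  by (simp add: A_def fps_power_zeroth geom_fps_nth)

lemma geom_prod_Suc_mult_one_minus_X:
  assumes "0 < p"
  shows "geom_prod p (Suc N) * (1 - fps_X) = geom_prod p N oo fps_X ^ p"
proof -
  have "geom_prod p (Suc N) = geom_fps 1 * (\<Prod>i\<le>N. geom_fps (p ^ Suc i))"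
    unfolding geom_prod_def by (subst prod.atMost_Suc_shift) simp
  also have "(\<Prod>i\<le>N. geom_fps (p ^ Suc i)) = (\<Prod>i\<le>N. geom_fps (p ^ i) oo fps_X ^ p)"
    using assms by (simp add: geom_fps_compose_X_power)
  also have "\<dots> = geom_prod p N oo fps_X ^ p"
    unfolding geom_prod_def using assms by (simp add: fps_compose_prod_distrib)
  finally have "geom_prod p (Suc N) * (1 - fps_X)
      = (geom_fps 1 * (1 - fps_X)) * (geom_prod p N oo fps_X ^ p)"
    by (simp only: mult_ac)
  then show ?thesis by (simp only: geom_fps_one_mult_one_minus_X mult_1_left)
qed

definition mahler_defect :: "nat \<Rightarrow> nat \<Rightarrow> int fps \<Rightarrow> int fps" where
  "mahler_defect p k F = F * (1 - fps_X) ^ k - (F oo fps_X ^ p)"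

lemma mahler_defect_A:
  assumes "2 \<le> p"
  shows "mahler_defect p k (Abs_fps (A p k)) = 0"
proof -
  have "(Abs_fps (A p k) * (1 - fps_X) ^ k) $ n = (Abs_fps (A p k) oo fps_X ^ p) $ n" for n
  proof -
    have "(Abs_fps (A p k) * (1 - fps_X) ^ k) $ n = (geom_prod p (Suc n) ^ k * (1 - fps_X) ^ k) $ n"
      unfolding fps_mult_nth using assms
      by (intro sum.cong refl) (simp add: A_eq_nth_geom_prod_power[where N = "Suc n"])
    also have "geom_prod p (Suc n) ^ k * (1 - fps_X) ^ k = geom_prod p n ^ k oo fps_X ^ p"
      using assms by (simp add: geom_prod_Suc_mult_one_minus_X fps_compose_power flip: power_mult_distrib)
    also have "(\<dots>) $ n = (Abs_fps (A p k) oo fps_X ^ p) $ n"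
      using assms
      by (simp add: fps_nth_compose_X_power A_eq_nth_geom_prod_power[where N = n] div_le_dividend)
    finally show ?thesis .
  qed
  then show ?thesis by (simp add: mahler_defect_def fps_eq_iff)
qed

lemma mahler_defect_diff:
  "mahler_defect p k (F - G) = mahler_defect p k F - mahler_defect p k G"
  by (simp add: mahler_defect_def fps_compose_sub_distrib algebra_simps)

lemma mahler_defect_fps_of_poly:
  assumes "0 < p"
  shows "mahler_defect p k (fps_of_poly R) = fps_of_poly (R * [:1, -1:] ^ k - pcompose R (monom 1 p))"
  using assms
  by (simp add: mahler_defect_def fps_of_poly_pcompose_monom fps_of_poly_mult fps_of_poly_diff
      fps_of_poly_power fps_of_poly_pCons fps_const_neg)

lemma fps_const_dvd_mahler_defect:
  assumes "0 < p" and "fps_const q dvd F"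
  shows "fps_const q dvd mahler_defect p k F"
proof -
  obtain G where "F = fps_const q * G" using assms(2) by (elim dvdE)
  then have "mahler_defect p k F = fps_const q * mahler_defect p k G"
    using assms(1) by (simp add: mahler_defect_def fps_compose_mult_distrib algebra_simps)
  then show ?thesis by simp
qed

lemma fps_const_dvd_of_mahler_defect:
  fixes H :: "int fps"
  assumes "1 < p" and "q dvd H $ 0" and "fps_const q dvd mahler_defect p k H"
  shows "fps_const q dvd H"
proof -
  have defect: "q dvd (H * (1 - fps_X) ^ k) $ n - (H oo fps_X ^ p) $ n" for n
    using assms(3) by (simp add: mahler_defect_def fps_const_dvd_iff)
  have "q dvd H $ n" for n
  proof (induction n rule: less_induct)
    case (less n)
    show ?case
    proof (cases "n = 0")
      case False
      define S where "S = (\<Sum>i<n. H $ i * ((1 - fps_X) ^ k) $ (n - i))"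
      have "(H * (1 - fps_X) ^ k) $ n = H $ n + S"
        by (simp add: S_def fps_mult_nth atLeast0AtMost lessThan_Suc_atMost[symmetric] fps_power_zeroth)
      then have "H $ n = ((H * (1 - fps_X) ^ k) $ n - (H oo fps_X ^ p) $ n) - S + (H oo fps_X ^ p) $ n"
        by simp
      moreover have "q dvd S"
        unfolding S_def using less.IH by (intro dvd_sum) simp
      moreover have "q dvd (H oo fps_X ^ p) $ n"
        using assms(1) less.IH False by (simp add: fps_nth_compose_X_power)
      ultimately show ?thesis by (metis defect dvd_add dvd_diff)
    qed (use assms(2) in simp)
  qed
  then show ?thesis by (simp add: fps_const_dvd_iff)
qed

lemma A_cong_coeff_one_minus_X_power:
  assumes "prime p" and k: "k = (p - 1) * m"
  shows "int p dvd A p k n - coeff ([:1, -1:] ^ m) n"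
proof -
  let ?T = "[:1, -1:] :: int poly"
  have p: "1 < p" using assms(1) by (rule prime_gt_1_nat)
  define H where "H = Abs_fps (A p k) - fps_of_poly (?T ^ m)"
  obtain p' where p': "p = Suc p'" using p by (cases p) auto
  have "m + k = p * m" by (simp add: k p')
  then have "?T ^ m * ?T ^ k = (?T ^ p) ^ m"
    by (simp only: power_add [symmetric] power_mult)
  moreover have "pcompose (?T ^ m) (monom 1 p) = (1 - monom 1 p) ^ m"
    by (simp add: pcompose_power_left pcompose_one_minus_X)
  ultimately have "poly_cong (int p) (?T ^ m * ?T ^ k) (pcompose (?T ^ m) (monom 1 p))"
    using poly_cong_power[OF one_minus_X_power_prime_cong[OF assms(1)]] by simp
  then have "fps_const (int p) dvd mahler_defect p k (fps_of_poly (?T ^ m))"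
    using p by (simp add: mahler_defect_fps_of_poly fps_const_dvd_fps_of_poly_iff poly_cong_def)
  then have "fps_const (int p) dvd mahler_defect p k H"
    using p by (simp add: H_def mahler_defect_diff mahler_defect_A)
  moreover have "H $ 0 = 0" by (simp add: H_def A_0 coeff_linear_poly_power)
  ultimately have "fps_const (int p) dvd H"
    using fps_const_dvd_of_mahler_defect[OF p] by simp
  then show ?thesis by (simp add: H_def fps_const_dvd_iff)
qed

lemma prime_dvd_A:
  assumes "prime p" and "m < n"
  shows "int p dvd A p ((p - 1) * m) n"
proof -
  have "degree ([:1, -1 :: int:] ^ m) \<le> m"
    using degree_power_le[of "[:1, -1 :: int:]" m] by simp
  then have "coeff ([:1, -1 :: int:] ^ m) n = 0"
    using assms(2) by (simp add: coeff_eq_0)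
  then show ?thesis
    using A_cong_coeff_one_minus_X_power[of p "(p - 1) * m" m n] assms(1) by simp
qed

lemma A_truncation_mahler_cong:
  assumes "2 \<le> p" and "\<And>n. N < n \<Longrightarrow> q dvd A p k n"
  obtains R where "coeff R 0 = 1" and "poly_cong q (R * [:1, -1:] ^ k) (pcompose R (monom 1 p))"
proof
  define R where "R = (\<Sum>n\<le>N. monom (A p k n) n)"
  have coeff_R: "coeff R n = (if n \<le> N then A p k n else 0)" for n
    by (simp add: R_def coeff_sum coeff_monom)
  then show "coeff R 0 = 1" by (simp add: A_0)
  have "fps_const q dvd fps_of_poly R - Abs_fps (A p k)"
    using assms(2) by (simp add: fps_const_dvd_iff coeff_R not_le)
  then have "fps_const q dvd mahler_defect p k (fps_of_poly R - Abs_fps (A p k))"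
    using assms(1) by (intro fps_const_dvd_mahler_defect) simp_all
  then have "fps_const q dvd mahler_defect p k (fps_of_poly R)"
    using assms(1) by (simp add: mahler_defect_diff mahler_defect_A)
  then show "poly_cong q (R * [:1, -1:] ^ k) (pcompose R (monom 1 p))"
    using assms(1) by (simp add: mahler_defect_fps_of_poly fps_const_dvd_fps_of_poly_iff poly_cong_def)
qed

lemma power2_dvd_if_multiplicity_ne_1:
  fixes p x :: "'a::factorial_semiring"
  assumes "\<not> is_unit p" and "p dvd x" and "multiplicity p x \<noteq> 1"
  shows "p ^ 2 dvd x"
proof (cases "x = 0")
  case False
  then have "0 < multiplicity p x"
    using assms(1,2) by (simp add: multiplicity_gt_zero_iff)
  with assms(3) show ?thesis by (intro multiplicity_dvd') simp
qed simp

lemma pred_mult_prime_power: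
  fixes p u s :: nat
  assumes "prime p" and "1 \<le> u" and "1 \<le> s"
  shows "p - 1 \<le> u * p ^ s - 1" and "\<not> p dvd u * p ^ s - 1"
proof -
  have "p \<le> p ^ s" using self_le_power[of p s] prime_gt_0_nat[OF assms(1)] assms(3) by simp
  also have "\<dots> \<le> u * p ^ s" using assms(2) by simp
  finally have "p \<le> u * p ^ s" .
  then show "p - 1 \<le> u * p ^ s - 1" by simp
  have "u * p ^ s - 1 + 1 = u * p ^ s"
    using \<open>p \<le> u * p ^ s\<close> prime_gt_0_nat[OF assms(1)] by linarith
  moreover have "p dvd u * p ^ s" using assms(3) by (intro dvd_mult dvd_power) simp
  ultimately have "p dvd (u * p ^ s - 1) + 1" by simp
  show "\<not> p dvd u * p ^ s - 1"
  proof
    assume "p dvd u * p ^ s - 1"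
    with \<open>p dvd (u * p ^ s - 1) + 1\<close> have "p dvd 1"
      using dvd_add_right_iff[of p "u * p ^ s - 1" 1] by blast
    with assms(1) show False by simp
  qed
qed

theorem theorem3p1:
  fixes p u s :: nat
  assumes "prime p" and "p \<ge> 3" and "2 \<le> u" and "u \<le> p - 1" and "s \<ge> 1"
  shows "infinite {n :: nat. multiplicity (int p) (A p ((p - 1) * (u * p ^ s - 1)) n) = 1}"
proof
  define m where "m = u * p ^ s - 1"
  define k where "k = (p - 1) * m"
  have m: "p - 1 \<le> m" "\<not> p dvd m"
    unfolding m_def using pred_mult_prime_power[of p u s] assms(1,3,5) by simp_all
  assume "finite {n. multiplicity (int p) (A p ((p - 1) * (u * p ^ s - 1)) n) = 1}"
  then obtain B where B: "\<And>n. multiplicity (int p) (A p k n) = 1 \<Longrightarrow> n \<le> B"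
    unfolding k_def m_def finite_nat_set_iff_bounded_le by blast
  have "int p ^ 2 dvd A p k n" if "max B m < n" for n
  proof (rule power2_dvd_if_multiplicity_ne_1)
    show "int p dvd A p k n" using prime_dvd_A[OF assms(1)] that by (simp add: k_def)
  qed (use B that prime_gt_1_nat[OF assms(1)] in fastforce)+
  then obtain R where R0: "coeff R 0 = 1"
    and cong: "poly_cong (int p ^ 2) (R * [:1, -1:] ^ k) (pcompose R (monom 1 p))"
    by (rule A_truncation_mahler_cong[OF prime_ge_2_nat[OF assms(1)]])
  have "\<not> int p dvd coeff R 0" using R0 prime_gt_1_nat[OF assms(1)] by simp
  from functional_cong_mod_sq_impossible[OF assms(1) m k_def this cong] show False .
qed

end
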